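(* Let $\kappa$ be a cardinal (or ordinal), let $C_\alpha$ ($\alpha<\kappa$) be compact metric spaces, let $C=\prod_{\alpha<\kappa}C_\alpha$, and let $X\subseteq C$ and $r\colon C\to X$ be a continuous map with $r(x)=x$ for all $x\in X$. Let $S\subseteq\kappa$ be $r$-admissible. Then the map $p_S\colon X\to X_S$, $p_S(x)=x\restriction S$, where $X_S=\{x\restriction S: x\in X\}\subseteq \prod_{\alpha\in S}C_\alpha$, is an open retraction.
   Context: A set $S\subseteq\kappa$ is called $r$-admissible if for all $x,x'\in C$, $x\restriction S=x'\restriction S$ implies $r(x)\restriction S=r(x')\restriction S$. A retraction is a continuous map $f\colon X\to Y$ which has a continuous right inverse, i.e. there is a continuous $j\colon Y\to X$ with $f\circ j=\mathrm{id}_Y$. An open retraction is a retraction which is an open map. All spaces are completely regular. *)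

theory Defs
  imports "HOL-Analysis.Analysis"
begin

definition r_admissible :: "('i \<Rightarrow> 'a) topology \<Rightarrow> (('i \<Rightarrow> 'a) \<Rightarrow> ('i \<Rightarrow> 'a)) \<Rightarrow> 'i set \<Rightarrow> bool" where
  "r_admissible C r S \<longleftrightarrow>
     (\<forall>x\<in>topspace C. \<forall>x'\<in>topspace C.
        restrict x S = restrict x' S \<longrightarrow> restrict (r x) S = restrict (r x') S)"

definition open_retraction :: "'a topology \<Rightarrow> 'b topology \<Rightarrow> ('a \<Rightarrow> 'b) \<Rightarrow> bool" where
  "open_retraction X Y f \<longleftrightarrow> retraction_map X Y f \<and> open_map X Y f"

end

theory Submission
  imports Defs
begin

text \<open>Write \<open>p\<close> for the restriction \<open>x \<mapsto> x\<restriction>S\<close> and \<open>P\<close>, \<open>Q\<close> for the products over \<open>K\<close>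
  and \<open>S\<close>. The map \<open>p\<close> is an open retraction \<open>P \<rightarrow> Q\<close>: it maps basic boxes onto basic boxes,
  and filling the coordinates outside \<open>S\<close> with those of a fixed point gives a continuous section \<open>e\<close>.
  Admissibility of \<open>S\<close> says exactly that \<open>p \<circ> r\<close> factors through \<open>p\<close>, and since \<open>r\<close> fixes \<open>X\<close>
  this factorisation is \<open>p\<close> itself: \<open>p (r x) = p x\<close> whenever \<open>p x \<in> p(X)\<close>. Hence \<open>r \<circ> e\<close> is a
  section of \<open>p\<restriction>X\<close>, and for \<open>U\<close> open in \<open>X\<close> we get \<open>p(U) = p(r\<^sup>-\<^sup>1 U) \<inter> p(X)\<close>, which is open
  in \<open>p(X)\<close>.\<close>

lemma restrict_override_on_eq:
  assumes "S \<subseteq> K" and "y \<in> extensional S"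
  shows "restrict (restrict (override_on x y S) K) S = y"
  using assms by (auto simp: fun_eq_iff extensional_def)

lemma open_map_restrict_product:
  assumes "S \<subseteq> K"
  shows "open_map (product_topology T K) (product_topology T S) (\<lambda>x. restrict x S)"
  unfolding open_map_def
proof (intro allI impI)
  fix V assume V: "openin (product_topology T K) V"
  show "openin (product_topology T S) ((\<lambda>x. restrict x S) ` V)"
    unfolding openin_product_topology_alt
  proof
    fix y assume "y \<in> (\<lambda>x. restrict x S) ` V"
    then obtain v where "v \<in> V" and y: "y = restrict v S"
      by blast
    then obtain U where fin: "finite {i \<in> K. U i \<noteq> topspace (T i)}"
      and opn: "\<forall>i\<in>K. openin (T i) (U i)" and v: "v \<in> Pi\<^sub>E K U" and UV: "Pi\<^sub>E K U \<subseteq> V"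
      using V unfolding openin_product_topology_alt by meson
    show "\<exists>U. finite {i \<in> S. U i \<noteq> topspace (T i)} \<and> (\<forall>i\<in>S. openin (T i) (U i)) \<and>
                y \<in> Pi\<^sub>E S U \<and> Pi\<^sub>E S U \<subseteq> (\<lambda>x. restrict x S) ` V"
    proof (intro exI [of _ U] conjI)
      show "finite {i \<in> S. U i \<noteq> topspace (T i)}"
        using assms by (blast intro: finite_subset [OF _ fin])
      show "\<forall>i\<in>S. openin (T i) (U i)" and "y \<in> Pi\<^sub>E S U"
        using assms opn v y by auto
      show "Pi\<^sub>E S U \<subseteq> (\<lambda>x. restrict x S) ` V"
      proof
        fix z assume z: "z \<in> Pi\<^sub>E S U"
        have "restrict (override_on v z S) K \<in> Pi\<^sub>E K U"
          using v z by (auto simp: PiE_iff override_on_def)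
        moreover have "restrict (restrict (override_on v z S) K) S = z"
          using z assms by (intro restrict_override_on_eq) (auto simp: PiE_iff)
        ultimately show "z \<in> (\<lambda>x. restrict x S) ` V"
          using UV by (metis image_eqI subsetD)
      qed
    qed
  qed
qed

lemma retraction_maps_restrict_product:
  assumes "S \<subseteq> K" and "x0 \<in> topspace (product_topology T K)"
  shows "retraction_maps (product_topology T K) (product_topology T S)
           (\<lambda>x. restrict x S) (\<lambda>y. restrict (override_on x0 y S) K)"
  unfolding retraction_maps_def
proof (intro conjI ballI)
  show "continuous_map (product_topology T K) (product_topology T S) (\<lambda>x. restrict x S)"
    using assms(1) by (rule continuous_on_restrict)
  show "continuous_map (product_topology T S) (product_topology T K)
          (\<lambda>y. restrict (override_on x0 y S) K)"
    unfolding continuous_map_componentwise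
    using assms by (auto simp: override_on_def)
  show "restrict (restrict (override_on x0 y S) K) S = y"
    if "y \<in> topspace (product_topology T S)" for y
    using that assms(1) by (intro restrict_override_on_eq) (auto simp: PiE_iff)
qed

lemma open_map_onto_image_of_retract:
  assumes p: "open_map P Q p"
    and X: "X \<subseteq> topspace P"
    and r: "continuous_map P (subtopology P X) r" "\<And>x. x \<in> X \<Longrightarrow> r x = x"
    and adm: "\<And>x x'. \<lbrakk>x \<in> topspace P; x' \<in> topspace P; p x = p x'\<rbrakk> \<Longrightarrow> p (r x) = p (r x')"
  shows "open_map (subtopology P X) (subtopology Q (p ` X)) p"
  unfolding open_map_def
proof (intro allI impI)
  fix U assume U: "openin (subtopology P X) U"
  then have "U \<subseteq> X"
    using openin_imp_subset by fastforce
  define V where "V = {z \<in> topspace P. r z \<in> U}"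
  have "openin P V"
    unfolding V_def using r(1) U by (rule openin_continuous_map_preimage)
  then have "openin Q (p ` V)"
    using p by (simp add: open_map_def)
  moreover have "p ` U = p ` V \<inter> p ` X"
  proof
    show "p ` U \<subseteq> p ` V \<inter> p ` X"
      using \<open>U \<subseteq> X\<close> X r(2) by (force simp: V_def)
    show "p ` V \<inter> p ` X \<subseteq> p ` U"
    proof
      fix y assume "y \<in> p ` V \<inter> p ` X"
      then obtain v x where "v \<in> V" "x \<in> X" and y: "y = p v" "y = p x"
        by blast
      then have "p (r v) = p x"
        using adm [of v x] X r(2) by (auto simp: V_def)
      moreover have "r v \<in> U"
        using \<open>v \<in> V\<close> by (simp add: V_def)
      ultimately show "y \<in> p ` U"
        using y by (metis image_eqI)
    qed
  qed
  ultimately show "openin (subtopology Q (p ` X)) (p ` U)"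
    unfolding openin_subtopology by blast
qed

lemma retraction_map_onto_image_of_retract:
  assumes p: "retraction_maps P Q p e"
    and X: "X \<subseteq> topspace P"
    and r: "continuous_map P (subtopology P X) r" "\<And>x. x \<in> X \<Longrightarrow> r x = x"
    and adm: "\<And>x x'. \<lbrakk>x \<in> topspace P; x' \<in> topspace P; p x = p x'\<rbrakk> \<Longrightarrow> p (r x) = p (r x')"
  shows "retraction_map (subtopology P X) (subtopology Q (p ` X)) p"
  unfolding retraction_map_def retraction_maps_def
proof (intro exI [of _ "r \<circ> e"] conjI ballI)
  have p_cont: "continuous_map P Q p" and e_cont: "continuous_map Q P e"
    and pe: "\<And>y. y \<in> topspace Q \<Longrightarrow> p (e y) = y"
    using p by (auto simp: retraction_maps_def)
  show "continuous_map (subtopology P X) (subtopology Q (p ` X)) p"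
    using p_cont by (auto simp: continuous_map_in_subtopology continuous_map_from_subtopology)
  show "continuous_map (subtopology Q (p ` X)) (subtopology P X) (r \<circ> e)"
    using e_cont r(1) by (intro continuous_map_from_subtopology continuous_map_compose)
  fix y assume "y \<in> topspace (subtopology Q (p ` X))"
  then obtain x where x: "x \<in> X" "y = p x" and y: "y \<in> topspace Q"
    by auto
  have "e y \<in> topspace P"
    using continuous_map_image_subset_topspace [OF e_cont] y by blast
  moreover have "p (e y) = p x"
    using pe y x(2) by simp
  ultimately have "p (r (e y)) = p (r x)"
    using adm x(1) X by blast
  then show "p ((r \<circ> e) y) = y"
    using r(2) x by simp
qed

theorem lemma2p1:
  fixes K :: "'i set" and T :: "'i \<Rightarrow> 'a topology"
    and X :: "('i \<Rightarrow> 'a) set" and r :: "('i \<Rightarrow> 'a) \<Rightarrow> ('i \<Rightarrow> 'a)" and S :: "'i set"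
  assumes "\<And>\<alpha>. \<alpha> \<in> K \<Longrightarrow> compact_space (T \<alpha>) \<and> metrizable_space (T \<alpha>)"
    and "X \<subseteq> topspace (product_topology T K)"
    and "continuous_map (product_topology T K) (subtopology (product_topology T K) X) r"
    and "\<And>x. x \<in> X \<Longrightarrow> r x = x"
    and "S \<subseteq> K"
    and "r_admissible (product_topology T K) r S"
  shows "open_retraction (subtopology (product_topology T K) X)
           (subtopology (product_topology T S) ((\<lambda>x. restrict x S) ` X))
           (\<lambda>x. restrict x S)"
proof -
  note retract = assms(2-4)
  have adm: "\<And>x x'. \<lbrakk>x \<in> topspace (product_topology T K); x' \<in> topspace (product_topology T K);
               restrict x S = restrict x' S\<rbrakk> \<Longrightarrow> restrict (r x) S = restrict (r x') S"
    using assms(6) unfolding r_admissible_def by blast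
  have "retraction_map (subtopology (product_topology T K) X)
          (subtopology (product_topology T S) ((\<lambda>x. restrict x S) ` X)) (\<lambda>x. restrict x S)"
  proof (cases "X = {}")
    case True
    then show ?thesis
      by (simp add: retraction_map_def retraction_maps_def)
  next
    case False
    then obtain x0 where x0: "x0 \<in> topspace (product_topology T K)"
      using assms(2) by blast
    show ?thesis
      by (rule retraction_map_onto_image_of_retract)
        (fact retraction_maps_restrict_product [OF assms(5) x0] retract adm)+
  qed
  moreover have "open_map (subtopology (product_topology T K) X)
          (subtopology (product_topology T S) ((\<lambda>x. restrict x S) ` X)) (\<lambda>x. restrict x S)"
    by (rule open_map_onto_image_of_retract)
      (fact open_map_restrict_product [OF assms(5)] retract adm)+
  ultimately show ?thesis
    by (simp add: open_retraction_def)
qed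

end
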